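(* Let $P\in\mathbb{R}^{p\times m}$, $Y_d\in\mathbb{R}^p$, plant $Y_k=PU_k+N_k$, $E_k=Y_d-Y_k$, $\bar U_k=-\Delta U_k$, $D_k=-\Delta N_k$, so that the extended state $\bar X_k=\begin{bmatrix}E_k\\ D_k\end{bmatrix}\in\mathbb{R}^{2p}$ satisfies $\bar X_{k+1}=\bar A\bar X_k+\bar B\bar U_k+F^{\top}\Delta D_k$ and $E_k=\bar C\bar X_k$, where $\bar B=\begin{bmatrix}P\\0\end{bmatrix}$. Let $\bar L\in\mathbb{R}^{2p\times p}$, let $\hat{\bar X}_0\in\mathbb{R}^{2p}$ be arbitrary, and define the extended state observer (ESO) $\hat{\bar X}_{k+1}=\bar A\hat{\bar X}_k+\bar B\bar U_k+\bar L(E_k-\bar C\hat{\bar X}_k)$, $k\in\mathbb{Z}_+$, for an arbitrary input sequence $(\bar U_k)$. Then: (a) $\hat{\bar X}_{k+1}=(\bar A-\bar L\bar C)\hat{\bar X}_k+\bar B\bar U_k+\bar LE_k$ and the observation error $\tilde{\bar X}_k=\bar X_k-\hat{\bar X}_k$ satisfies $\tilde{\bar X}_{k+1}=(\bar A-\bar L\bar C)\tilde{\bar X}_k-F^{\top}\Delta^2N_k$ for all $k\in\mathbb{Z}_+$; (b) the observation error has the following two properties — (boundedness) there exist a class-$\mathcal{K}_\infty$ function $\chi_1$, a class-$\mathcal{KL}$ function $\zeta$ and a finite $\beta_0\ge0$ with $\|\tilde{\bar X}_k\|\le\chi_1(\beta_{\Delta^2N})+\zeta(\beta_0,k)$ for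 all $k$, and (superattractiveness) there is a class-$\mathcal{K}_\infty$ function $\chi_2$ with $\limsup_{k\to\infty}\|\tilde{\bar X}_k\|\le\chi_2(\beta^{ess}_{\Delta^2N})$ — for all bounded uncertainties and initial conditions if and only if $\rho(\bar A-\bar L\bar C)<1$; (c) there always exists a gain $\bar L\in\mathbb{R}^{2p\times p}$ with $\rho(\bar A-\bar L\bar C)<1$.
   Context: Notation: $\mathbb{Z}_+=\{0,1,2,\dots\}$. For a sequence $(f_k)$, $\Delta f_k=f_{k+1}-f_k$, $\Delta^2f_k=\Delta(\Delta f_k)$. $\|\cdot\|$ is a fixed vector norm, $\rho(\cdot)$ the spectral radius. $(N_k)\subset\mathbb{R}^p$ is an unknown bounded uncertainty sequence; $\beta_{\Delta^2N}=\sup_k\|\Delta^2N_k\|$, $\beta^{ess}_{\Delta^2N}=\limsup_{k\to\infty}\|\Delta^2N_k\|$. Matrices: $\bar A=\begin{bmatrix}I_p&I_p\\0&I_p\end{bmatrix}$, $\bar C=\begin{bmatrix}I_p&0\end{bmatrix}$, $F=\begin{bmatrix}0&I_p\end{bmatrix}$. *)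

theory Defs
  imports "Jordan_Normal_Form.Spectral_Radius" "HOL-Library.Extended_Real"
begin

definition vnorm :: "real vec \<Rightarrow> real" where
  "vnorm v = sqrt (\<Sum>i<dim_vec v. (v $ i)^2)"

definition rho :: "real mat \<Rightarrow> real" where
  "rho A = spectral_radius (map_mat complex_of_real A)"

definition dlt :: "(nat \<Rightarrow> real vec) \<Rightarrow> nat \<Rightarrow> real vec" where
  "dlt f k = f (Suc k) - f k"

text \<open>Abar = [[I,I],[0,I]], Cbar = [I 0], F = [0 I], Bbar = [P;0].\<close>
definition Abar :: "nat \<Rightarrow> real mat" where
  "Abar p = mat (2*p) (2*p) (\<lambda>(i,j). if i = j \<or> (i < p \<and> j = i + p) then 1 else 0)"

definition Cbar :: "nat \<Rightarrow> real mat" where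
  "Cbar p = mat p (2*p) (\<lambda>(i,j). if j = i then 1 else 0)"

definition Fmat :: "nat \<Rightarrow> real mat" where
  "Fmat p = mat p (2*p) (\<lambda>(i,j). if j = i + p then 1 else 0)"

definition Bbar :: "real mat \<Rightarrow> real mat" where
  "Bbar P = mat (2 * dim_row P) (dim_col P) (\<lambda>(i,j). if i < dim_row P then P $$ (i,j) else 0)"

definition Err :: "real mat \<Rightarrow> real vec \<Rightarrow> (nat \<Rightarrow> real vec) \<Rightarrow> (nat \<Rightarrow> real vec) \<Rightarrow> nat \<Rightarrow> real vec" where
  "Err P Yd U N k = Yd - (P *\<^sub>v U k + N k)"

definition Dist :: "(nat \<Rightarrow> real vec) \<Rightarrow> nat \<Rightarrow> real vec" where
  "Dist N k = - dlt N k"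

definition Ubar :: "(nat \<Rightarrow> real vec) \<Rightarrow> nat \<Rightarrow> real vec" where
  "Ubar U k = - dlt U k"

definition Xbar :: "real mat \<Rightarrow> real vec \<Rightarrow> (nat \<Rightarrow> real vec) \<Rightarrow> (nat \<Rightarrow> real vec) \<Rightarrow> nat \<Rightarrow> real vec" where
  "Xbar P Yd U N k = Err P Yd U N k @\<^sub>v Dist N k"

primrec eso :: "real mat \<Rightarrow> real vec \<Rightarrow> real mat \<Rightarrow> (nat \<Rightarrow> real vec) \<Rightarrow> (nat \<Rightarrow> real vec)
    \<Rightarrow> real vec \<Rightarrow> nat \<Rightarrow> real vec" where
  "eso P Yd L U N x0 0 = x0"
| "eso P Yd L U N x0 (Suc k) =
     Abar (dim_row P) *\<^sub>v eso P Yd L U N x0 k + Bbar P *\<^sub>v Ubar U k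
     + L *\<^sub>v (Err P Yd U N k - Cbar (dim_row P) *\<^sub>v eso P Yd L U N x0 k)"

definition Xtil where
  "Xtil P Yd L U N x0 k = Xbar P Yd U N k - eso P Yd L U N x0 k"

definition beta_d2N :: "(nat \<Rightarrow> real vec) \<Rightarrow> real" where
  "beta_d2N N = (SUP k. vnorm (dlt (dlt N) k))"

definition beta_ess_d2N :: "(nat \<Rightarrow> real vec) \<Rightarrow> real" where
  "beta_ess_d2N N = real_of_ereal (limsup (\<lambda>k. ereal (vnorm (dlt (dlt N) k))))"

definition class_K :: "(real \<Rightarrow> real) \<Rightarrow> bool" where
  "class_K f \<longleftrightarrow> continuous_on {0..} f \<and> f 0 = 0 \<and> strict_mono_on {0..} f"

definition class_Kinf :: "(real \<Rightarrow> real) \<Rightarrow> bool" where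
  "class_Kinf f \<longleftrightarrow> class_K f \<and> filterlim f at_top at_top"

definition class_KL :: "(real \<Rightarrow> nat \<Rightarrow> real) \<Rightarrow> bool" where
  "class_KL b \<longleftrightarrow> (\<forall>k. class_K (\<lambda>s. b s k)) \<and>
     (\<forall>s\<ge>0. antimono (\<lambda>k. b s k) \<and> (\<lambda>k. b s k) \<longlonglongrightarrow> 0)"

end

(*
  The observation error obeys the linear recursion  Xtil (k+1) = M Xtil k - F^T Delta^2 N k
  with M = Abar - L Cbar: the extended state and the observer are driven by the same input,
  and the output injection acts on E = Cbar Xbar exactly as on the estimate.

  If rho M < 1, rescaling M by a rate mu between rho M and 1 makes its powers bounded, so
  |M^k x| <= K mu^k |x|.  Summing the forced response gives
  |Xtil k| <= K / (1 - mu) * sup |Delta^2 N| + K |Xtil 0| mu^k, and restarting the same estimate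
  at late times bounds the limit superior by K / (1 - mu) * limsup |Delta^2 N|.
  Conversely, without input and uncertainty the error is M^k Xtil 0 for an arbitrary initial
  error, and the boundedness estimate (with Delta^2 N = 0) forces all these trajectories to zero,
  which rules out an eigenvalue of modulus at least 1.  Finally the gain L = [2I; I] makes M
  nilpotent.
*)
theory Submission
  imports Defs "HOL-Analysis.L2_Norm"
begin

lemma zero_mat_mult_vec [simp]: "v \<in> carrier_vec nc \<Longrightarrow> 0\<^sub>m nr nc *\<^sub>v v = 0\<^sub>v nr"
  by (rule eq_vecI) (auto simp: scalar_prod_def)

lemma mult_mat_vec_zero_vec [simp]: "A \<in> carrier_mat nr nc \<Longrightarrow> A *\<^sub>v 0\<^sub>v nc = 0\<^sub>v nr"
  by (rule eq_vecI) (auto simp: scalar_prod_def)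

lemma append_vec_diff:
  assumes "a \<in> carrier_vec n" "a' \<in> carrier_vec n" "b \<in> carrier_vec m" "b' \<in> carrier_vec m"
  shows "(a @\<^sub>v b) - (a' @\<^sub>v b') = (a - a') @\<^sub>v (b - b')"
  by (rule eq_vecI) (use assms in auto)

lemma vnorm_eq_L2_set: "vnorm v = L2_set (\<lambda>i. v $ i) {..<dim_vec v}"
  by (simp add: vnorm_def L2_set_def)

lemma vnorm_nonneg [simp]: "0 \<le> vnorm v"
  by (simp add: vnorm_eq_L2_set)

lemma vnorm_zero_vec [simp]: "vnorm (0\<^sub>v n) = 0"
  by (simp add: vnorm_def)

lemma vnorm_uminus [simp]: "vnorm (- v) = vnorm v"
  by (simp add: vnorm_def)

lemma vnorm_add_le:
  assumes "dim_vec a = dim_vec b"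
  shows "vnorm (a + b) \<le> vnorm a + vnorm b"
proof -
  have "vnorm (a + b) = L2_set (\<lambda>i. a $ i + b $ i) {..<dim_vec b}"
    unfolding vnorm_eq_L2_set by (rule L2_set_cong) (use assms in auto)
  also have "\<dots> \<le> vnorm a + vnorm b"
    using assms by (simp add: vnorm_eq_L2_set L2_set_triangle_ineq)
  finally show ?thesis .
qed

lemma vnorm_diff_le:
  assumes "a \<in> carrier_vec n" "b \<in> carrier_vec n"
  shows "vnorm (a - b) \<le> vnorm a + vnorm b"
  using vnorm_add_le[of a "- b"] assms by (simp add: minus_add_uminus_vec)

lemma vnorm_le_add_diff:
  assumes "a \<in> carrier_vec n" "b \<in> carrier_vec n"
  shows "vnorm a \<le> vnorm b + vnorm (a - b)"
proof -
  have "a = b + (a - b)"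
    using assms by (intro eq_vecI) auto
  then show ?thesis
    using vnorm_add_le[of b "a - b"] assms by simp
qed

lemma abs_index_le_vnorm:
  assumes "i < dim_vec v"
  shows "\<bar>v $ i\<bar> \<le> vnorm v"
proof -
  have "\<bar>v $ i\<bar> \<le> L2_set (\<lambda>i. \<bar>v $ i\<bar>) {..<dim_vec v}"
    by (rule member_le_L2_set) (use assms in auto)
  then show ?thesis
    by (simp add: vnorm_eq_L2_set L2_set_def)
qed

lemma vnorm_append: "vnorm (x @\<^sub>v y) = sqrt ((vnorm x)\<^sup>2 + (vnorm y)\<^sup>2)"
proof -
  let ?f = "\<lambda>i. ((x @\<^sub>v y) $ i)\<^sup>2" and ?nx = "dim_vec x" and ?ny = "dim_vec y"
  have "(\<Sum>i\<in>{0..<?nx + ?ny}. ?f i) = (\<Sum>i\<in>{0..<?nx}. ?f i) + (\<Sum>i\<in>{?nx..<?nx + ?ny}. ?f i)"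
    by (rule sum.atLeastLessThan_concat[symmetric]) simp_all
  also have "(\<Sum>i\<in>{0..<?nx}. ?f i) = (\<Sum>i\<in>{0..<?nx}. (x $ i)\<^sup>2)"
    by (rule sum.cong) simp_all
  also have "(\<Sum>i\<in>{?nx..<?nx + ?ny}. ?f i) = (\<Sum>i\<in>{0..<?ny}. (y $ i)\<^sup>2)"
    using sum.shift_bounds_nat_ivl[of ?f 0 ?nx ?ny] by (simp add: add.commute)
  finally show ?thesis
    by (simp add: vnorm_def atLeast0LessThan sum_nonneg)
qed

lemma vnorm_mult_vec_le:
  assumes A: "A \<in> carrier_mat n n" and x: "x \<in> carrier_vec n"
    and c: "\<And>i j. i < n \<Longrightarrow> j < n \<Longrightarrow> \<bar>A $$ (i, j)\<bar> \<le> c"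
  shows "vnorm (A *\<^sub>v x) \<le> real n * real n * c * vnorm x"
proof -
  have row: "\<bar>(A *\<^sub>v x) $ i\<bar> \<le> real n * c * vnorm x" if i: "i < n" for i
  proof -
    have "\<bar>(A *\<^sub>v x) $ i\<bar> \<le> (\<Sum>j<n. \<bar>A $$ (i, j)\<bar> * \<bar>x $ j\<bar>)"
      using A x i sum_abs[of "\<lambda>j. A $$ (i, j) * x $ j" "{..<n}"]
      by (simp add: scalar_prod_def atLeast0LessThan abs_mult)
    also have "\<dots> \<le> (\<Sum>j<n. c * vnorm x)"
      using c[OF i] x abs_index_le_vnorm[of _ x]
      by (intro sum_mono mult_mono) (auto intro: order_trans[OF abs_ge_zero])
    finally show ?thesis
      by simp
  qed
  have "vnorm (A *\<^sub>v x) \<le> (\<Sum>i<n. \<bar>(A *\<^sub>v x) $ i\<bar>)"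
    using A L2_set_le_sum_abs[of "\<lambda>i. (A *\<^sub>v x) $ i" "{..<n}"] by (simp add: vnorm_eq_L2_set)
  also have "\<dots> \<le> (\<Sum>i<n. real n * c * vnorm x)"
    by (intro sum_mono row) simp
  finally show ?thesis
    by (simp add: mult.assoc)
qed

section \<open>Linear recursions driven by a bounded input\<close>

lemma pow_mat_Suc_mult_vec:
  assumes "M \<in> carrier_mat n n" "x \<in> carrier_vec n"
  shows "M ^\<^sub>m Suc k *\<^sub>v x = M ^\<^sub>m k *\<^sub>v (M *\<^sub>v x)"
  using assms assoc_mult_mat_vec[of "M ^\<^sub>m k" n n M n x] by simp

lemma pow_mat_add_mult_vec:
  assumes "M \<in> carrier_mat n n" "x \<in> carrier_vec n"
  shows "M ^\<^sub>m (i + j) *\<^sub>v x = M ^\<^sub>m i *\<^sub>v (M ^\<^sub>m j *\<^sub>v x)"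
  using assms(2)
proof (induction j arbitrary: x)
  case 0
  then show ?case using assms(1) by simp
next
  case (Suc j)
  then have "M *\<^sub>v x \<in> carrier_vec n"
    using assms(1) by simp
  then show ?case
    using Suc assms(1) by (simp add: pow_mat_Suc_mult_vec[of M n] del: pow_mat.simps)
qed

lemma linear_recursion_eq_pow:
  assumes M: "M \<in> carrier_mat n n" and X: "\<And>k. X k \<in> carrier_vec n"
    and step: "\<And>k. X (Suc k) = M *\<^sub>v X k"
  shows "X (j + k) = M ^\<^sub>m k *\<^sub>v X j"
proof (induction k arbitrary: j)
  case 0
  then show ?case using M X by simp
next
  case (Suc k)
  have "X (j + Suc k) = M ^\<^sub>m k *\<^sub>v X (Suc j)"
    using Suc[of "Suc j"] by simp
  then show ?case
    by (simp add: step pow_mat_Suc_mult_vec[OF M X] del: pow_mat.simps)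
qed

locale exp_stable_recursion =
  fixes n :: nat and M :: "real mat" and X w :: "nat \<Rightarrow> real vec" and K \<mu> :: real
  assumes M_carrier: "M \<in> carrier_mat n n"
    and X_carrier: "\<And>k. X k \<in> carrier_vec n" and w_carrier: "\<And>k. w k \<in> carrier_vec n"
    and step: "\<And>k. X (Suc k) = M *\<^sub>v X k + w k"
    and decay: "\<And>k x. x \<in> carrier_vec n \<Longrightarrow> vnorm (M ^\<^sub>m k *\<^sub>v x) \<le> K * \<mu> ^ k * vnorm x"
    and K_nonneg: "0 \<le> K" and \<mu>_nonneg: "0 \<le> \<mu>" and \<mu>_less_1: "\<mu> < 1"
begin

lemma forced_response_le:
  assumes "\<And>j. k0 \<le> j \<Longrightarrow> vnorm (w j) \<le> b"
  shows "vnorm (X (k0 + k) - M ^\<^sub>m k *\<^sub>v X k0) \<le> K * b * (\<Sum>i<k. \<mu> ^ i)"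
  using assms
proof (induction k arbitrary: k0)
  case 0
  then show ?case using M_carrier X_carrier[of k0] by simp
next
  case (Suc k)
  \<comment> \<open>the response from \<open>k0\<close> is the response from \<open>Suc k0\<close> plus the propagated input \<open>M^k w k0\<close>\<close>
  let ?Mk = "M ^\<^sub>m k" and ?r = "X (Suc k0 + k) - M ^\<^sub>m k *\<^sub>v X (Suc k0)"
  have Mk: "?Mk \<in> carrier_mat n n"
    using M_carrier by simp
  have "?Mk *\<^sub>v X (Suc k0) = M ^\<^sub>m Suc k *\<^sub>v X k0 + ?Mk *\<^sub>v w k0"
    using M_carrier X_carrier w_carrier
    by (simp add: step pow_mat_Suc_mult_vec[OF M_carrier X_carrier] mult_add_distrib_mat_vec[OF Mk]
        del: pow_mat.simps)
  then have "X (k0 + Suc k) - M ^\<^sub>m Suc k *\<^sub>v X k0 = ?r + ?Mk *\<^sub>v w k0"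
    using M_carrier X_carrier[of "Suc k0 + k"] X_carrier[of k0] w_carrier[of k0]
    by (intro eq_vecI) (auto simp del: pow_mat.simps)
  also have "vnorm \<dots> \<le> vnorm ?r + vnorm (?Mk *\<^sub>v w k0)"
    using M_carrier X_carrier[of "Suc k0 + k"] by (intro vnorm_add_le) simp
  also have "\<dots> \<le> K * b * (\<Sum>i<k. \<mu> ^ i) + K * \<mu> ^ k * b"
  proof (rule add_mono)
    show "vnorm ?r \<le> K * b * (\<Sum>i<k. \<mu> ^ i)"
      using Suc.IH[of "Suc k0"] Suc.prems by simp
    have "vnorm (?Mk *\<^sub>v w k0) \<le> K * \<mu> ^ k * vnorm (w k0)"
      by (rule decay[OF w_carrier])
    also have "\<dots> \<le> K * \<mu> ^ k * b"
      using Suc.prems[of k0] K_nonneg \<mu>_nonneg by (intro mult_left_mono) simp_all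
    finally show "vnorm (?Mk *\<^sub>v w k0) \<le> K * \<mu> ^ k * b" .
  qed
  also have "\<dots> = K * b * (\<Sum>i<Suc k. \<mu> ^ i)"
    by (simp add: algebra_simps)
  finally show ?case .
qed

lemma norm_le:
  assumes w_le: "\<And>j. k0 \<le> j \<Longrightarrow> vnorm (w j) \<le> b"
  shows "vnorm (X (k0 + k)) \<le> K * \<mu> ^ k * vnorm (X k0) + K * b / (1 - \<mu>)"
proof -
  have "0 \<le> K * b"
    using K_nonneg order_trans[OF vnorm_nonneg w_le[of k0]] by simp
  moreover have "(\<Sum>i<k. \<mu> ^ i) \<le> 1 / (1 - \<mu>)"
    using \<mu>_nonneg \<mu>_less_1 by (simp add: sum_gp_strict divide_right_mono)
  ultimately have "K * b * (\<Sum>i<k. \<mu> ^ i) \<le> K * b / (1 - \<mu>)"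
    using mult_left_mono[of "\<Sum>i<k. \<mu> ^ i" "1 / (1 - \<mu>)" "K * b"] by simp
  moreover have "vnorm (X (k0 + k)) \<le> vnorm (M ^\<^sub>m k *\<^sub>v X k0) + vnorm (X (k0 + k) - M ^\<^sub>m k *\<^sub>v X k0)"
    using X_carrier mult_mat_vec_carrier[OF pow_carrier_mat[OF M_carrier] X_carrier]
    by (rule vnorm_le_add_diff)
  ultimately show ?thesis
    using decay[OF X_carrier, of k k0] forced_response_le[of k0 b k, OF w_le] by linarith
qed

lemma limsup_le:
  assumes "eventually (\<lambda>j. vnorm (w j) \<le> b) sequentially"
  shows "limsup (\<lambda>k. ereal (vnorm (X k))) \<le> ereal (K * b / (1 - \<mu>))"
proof -
  obtain k0 where k0: "\<And>j. k0 \<le> j \<Longrightarrow> vnorm (w j) \<le> b"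
    using assms by (auto simp: eventually_sequentially)
  define g where "g k = K * \<mu> ^ (k - k0) * vnorm (X k0) + K * b / (1 - \<mu>)" for k
  have "eventually (\<lambda>k. ereal (vnorm (X k)) \<le> ereal (g k)) sequentially"
  proof (rule eventually_sequentiallyI)
    fix k assume "k0 \<le> k"
    then show "ereal (vnorm (X k)) \<le> ereal (g k)"
      using norm_le[of k0 b "k - k0", OF k0] by (simp add: g_def)
  qed
  then have "limsup (\<lambda>k. ereal (vnorm (X k))) \<le> limsup (\<lambda>k. ereal (g k))"
    by (rule Limsup_mono)
  also have "limsup (\<lambda>k. ereal (g k)) = ereal (K * b / (1 - \<mu>))"
  proof (rule lim_imp_Limsup)
    have "(\<lambda>k. \<mu> ^ (k - k0)) \<longlonglongrightarrow> 0"
      by (rule LIMSEQ_offset[of _ k0]) (use \<mu>_nonneg \<mu>_less_1 in \<open>simp add: LIMSEQ_power_zero\<close>)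
    then have "g \<longlonglongrightarrow> K * 0 * vnorm (X k0) + K * b / (1 - \<mu>)"
      unfolding g_def by (intro tendsto_intros)
    then show "(\<lambda>k. ereal (g k)) \<longlonglongrightarrow> ereal (K * b / (1 - \<mu>))"
      by simp
  qed simp
  finally show ?thesis .
qed

lemma limsup_le_limsup:
  assumes "limsup (\<lambda>k. ereal (vnorm (w k))) \<le> ereal c"
  shows "limsup (\<lambda>k. ereal (vnorm (X k))) \<le> ereal (K * c / (1 - \<mu>))"
proof (rule ereal_le_epsilon2)
  fix e :: real assume e: "0 < e"
  define \<delta> where "\<delta> = e * (1 - \<mu>) / (K + 1)"
  have \<delta>: "0 < \<delta>"
    using e K_nonneg \<mu>_less_1 by (simp add: \<delta>_def)
  have "limsup (\<lambda>k. ereal (vnorm (w k))) < ereal (c + \<delta>)"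
    using assms \<delta> by (simp add: order.strict_trans1)
  then have "eventually (\<lambda>k. ereal (vnorm (w k)) < ereal (c + \<delta>)) sequentially"
    by (rule Limsup_lessD)
  then have "eventually (\<lambda>k. vnorm (w k) \<le> c + \<delta>) sequentially"
    by (rule eventually_mono) simp
  then have "limsup (\<lambda>k. ereal (vnorm (X k))) \<le> ereal (K * (c + \<delta>) / (1 - \<mu>))"
    by (rule limsup_le)
  also have "K * (c + \<delta>) / (1 - \<mu>) \<le> K * c / (1 - \<mu>) + e"
  proof -
    have "1 - \<mu> \<noteq> 0" "K + 1 \<noteq> 0"
      using \<mu>_less_1 K_nonneg by simp_all
    then have "K * \<delta> / (1 - \<mu>) = e * (K / (K + 1))"
      by (simp add: \<delta>_def)
    also have "\<dots> \<le> e * 1"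
      using e K_nonneg by (intro mult_left_mono) simp_all
    finally show ?thesis
      by (simp add: distrib_left add_divide_distrib)
  qed
  finally show "limsup (\<lambda>k. ereal (vnorm (X k))) \<le> ereal (K * c / (1 - \<mu>)) + ereal e"
    by simp
qed

end

section \<open>Spectral radius and decay of matrix powers\<close>

lemma smult_mat_mult_vec:
  fixes a :: "'a :: comm_ring_1"
  assumes "A \<in> carrier_mat nr nc" "v \<in> carrier_vec nc"
  shows "(a \<cdot>\<^sub>m A) *\<^sub>v v = a \<cdot>\<^sub>v (A *\<^sub>v v)"
  using assms
  by (intro eq_vecI) (auto simp: scalar_prod_def sum_distrib_left mult.assoc intro!: sum.cong)

lemma smult_pow_mat:
  fixes a :: "'a :: comm_ring_1"
  assumes A: "A \<in> carrier_mat n n"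
  shows "(a \<cdot>\<^sub>m A) ^\<^sub>m k = (a ^ k) \<cdot>\<^sub>m (A ^\<^sub>m k)"
proof (induction k)
  case 0
  then show ?case using A by (intro eq_matI) auto
next
  case (Suc k)
  have "(a \<cdot>\<^sub>m A) ^\<^sub>m Suc k = (a ^ k \<cdot>\<^sub>m A ^\<^sub>m k) * (a \<cdot>\<^sub>m A)"
    using Suc by simp
  also have "\<dots> = a \<cdot>\<^sub>m (a ^ k \<cdot>\<^sub>m (A ^\<^sub>m k * A))"
    using A by (simp add: mult_smult_assoc_mat[of _ n n _ n] mult_smult_distrib[of _ n n _ n])
  also have "\<dots> = (a ^ Suc k) \<cdot>\<^sub>m (A ^\<^sub>m Suc k)"
    by (intro eq_matI) (auto simp: mult.assoc)
  finally show ?case .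
qed

lemma spectral_radius_smult_le:
  assumes A: "A \<in> carrier_mat n n" and n: "0 < n" and c: "c \<noteq> 0"
  shows "spectral_radius (c \<cdot>\<^sub>m A) \<le> norm c * spectral_radius A"
proof -
  have cA: "c \<cdot>\<^sub>m A \<in> carrier_mat n n"
    using A by simp
  obtain ev where ev: "ev \<in> spectrum (c \<cdot>\<^sub>m A)" and sr: "spectral_radius (c \<cdot>\<^sub>m A) = norm ev"
    using spectral_radius_mem_max(1)[OF cA n] by auto
  then obtain v where v: "eigenvector (c \<cdot>\<^sub>m A) v ev"
    unfolding spectrum_def eigenvalue_def by auto
  then have v_carrier: "v \<in> carrier_vec n" and "v \<noteq> 0\<^sub>v n"
    using cA by (auto simp: eigenvector_def)
  have "A *\<^sub>v v = (1 / c) \<cdot>\<^sub>v ((c \<cdot>\<^sub>m A) *\<^sub>v v)"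
    using A v_carrier c by (simp add: smult_mat_mult_vec smult_smult_assoc)
  also have "\<dots> = (ev / c) \<cdot>\<^sub>v v"
    using v cA by (simp add: eigenvector_def smult_smult_assoc)
  finally have "eigenvector A v (ev / c)"
    using A v_carrier \<open>v \<noteq> 0\<^sub>v n\<close> by (simp add: eigenvector_def)
  then have "ev / c \<in> spectrum A"
    unfolding spectrum_def eigenvalue_def by blast
  then have "norm (ev / c) \<le> spectral_radius A"
    using spectral_radius_mem_max(2)[OF A n] by blast
  then show ?thesis
    using sr c by (simp add: norm_divide divide_le_eq mult.commute)
qed

lemma spectral_radius_less_1_imp_geometric_norm_bound:
  assumes A: "A \<in> carrier_mat n n" and n: "0 < n" and sr: "spectral_radius A < 1"
  obtains c \<mu> where "0 < c" "0 < \<mu>" "\<mu> < 1" "\<And>k. norm_bound (A ^\<^sub>m k) (c * \<mu> ^ k)"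
proof -
  have "0 \<le> spectral_radius A"
    using spectral_radius_mem_max(1)[OF A n] by auto
  define \<mu> where "\<mu> = (spectral_radius A + 1) / 2"
  have \<mu>: "0 < \<mu>" "\<mu> < 1" "spectral_radius A < \<mu>"
    using \<open>0 \<le> spectral_radius A\<close> sr by (auto simp: \<mu>_def)
  define B where "B = complex_of_real (1 / \<mu>) \<cdot>\<^sub>m A"
  have B: "B \<in> carrier_mat n n"
    using A by (simp add: B_def)
  \<comment> \<open>rescaling by \<open>1 / \<mu>\<close> turns decay at rate \<open>\<mu>\<close> into mere boundedness\<close>
  have "spectral_radius B \<le> (1 / \<mu>) * spectral_radius A"
    using spectral_radius_smult_le[OF A n, of "complex_of_real (1 / \<mu>)"] \<mu>(1) by (simp add: B_def norm_divide)
  also have "\<dots> < 1"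
    using \<mu> by (simp add: field_simps)
  finally obtain c where c: "\<And>k. norm_bound (B ^\<^sub>m k) c"
    using spectral_radius_jnf_norm_bound_less_1_upper_triangular[OF B] by auto
  have "A = complex_of_real \<mu> \<cdot>\<^sub>m B"
    using A \<mu>(1) by (intro eq_matI) (auto simp: B_def simp flip: of_real_mult)
  then have pow: "A ^\<^sub>m k = complex_of_real \<mu> ^ k \<cdot>\<^sub>m B ^\<^sub>m k" for k
    using smult_pow_mat[OF B] by simp
  have "norm_bound (A ^\<^sub>m k) (max c 1 * \<mu> ^ k)" for k
    unfolding norm_bound_def
  proof (intro allI impI)
    fix i j assume "i < dim_row (A ^\<^sub>m k)" "j < dim_col (A ^\<^sub>m k)"
    then have ij: "i < n" "j < n"
      using carrier_matD[OF pow_carrier_mat[OF A, of k]] by auto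
    have "norm ((B ^\<^sub>m k) $$ (i, j)) \<le> c"
      using c[of k] ij carrier_matD[OF pow_carrier_mat[OF B, of k]] unfolding norm_bound_def by auto
    have "norm ((A ^\<^sub>m k) $$ (i, j)) = \<mu> ^ k * norm ((B ^\<^sub>m k) $$ (i, j))"
      using ij B \<mu>(1) by (simp add: pow norm_mult norm_power)
    also have "\<dots> \<le> \<mu> ^ k * max c 1"
      using \<open>norm ((B ^\<^sub>m k) $$ (i, j)) \<le> c\<close> \<mu>(1) by (intro mult_left_mono) auto
    finally show "norm ((A ^\<^sub>m k) $$ (i, j)) \<le> max c 1 * \<mu> ^ k"
      by (simp add: mult.commute)
  qed
  then show ?thesis
    using that[of "max c 1" \<mu>] \<mu> by simp
qed

lemma rho_less_1_imp_pow_decay: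
  assumes M: "M \<in> carrier_mat n n" and n: "0 < n" and r: "rho M < 1"
  obtains K \<mu> where "0 < K" "0 < \<mu>" "\<mu> < 1"
    "\<And>k x. x \<in> carrier_vec n \<Longrightarrow> vnorm (M ^\<^sub>m k *\<^sub>v x) \<le> K * \<mu> ^ k * vnorm x"
proof -
  let ?Mc = "map_mat complex_of_real M"
  have Mc: "?Mc \<in> carrier_mat n n"
    using M by simp
  obtain c \<mu> where c: "0 < c" and \<mu>: "0 < \<mu>" "\<mu> < 1"
    and bound: "\<And>k. norm_bound (?Mc ^\<^sub>m k) (c * \<mu> ^ k)"
    using spectral_radius_less_1_imp_geometric_norm_bound[OF Mc n] r by (auto simp: rho_def)
  have entry: "\<bar>(M ^\<^sub>m k) $$ (i, j)\<bar> \<le> c * \<mu> ^ k" if ij: "i < n" "j < n" for k i j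
  proof -
    have "?Mc ^\<^sub>m k = map_mat complex_of_real (M ^\<^sub>m k)"
      by (rule of_real_hom.mat_hom_pow[OF M, symmetric])
    then have "(?Mc ^\<^sub>m k) $$ (i, j) = complex_of_real ((M ^\<^sub>m k) $$ (i, j))"
      using ij M by simp
    moreover have "norm ((?Mc ^\<^sub>m k) $$ (i, j)) \<le> c * \<mu> ^ k"
      using bound[of k] ij carrier_matD[OF pow_carrier_mat[OF Mc, of k]]
      unfolding norm_bound_def by auto
    ultimately show ?thesis
      by simp
  qed
  show ?thesis
  proof (rule that[of "real n * real n * c" \<mu>])
    show "0 < real n * real n * c"
      using n c by simp
    show "vnorm (M ^\<^sub>m k *\<^sub>v x) \<le> real n * real n * c * \<mu> ^ k * vnorm x"
      if "x \<in> carrier_vec n" for k x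
      using vnorm_mult_vec_le[OF pow_carrier_mat[OF M] that entry] by (simp add: mult.assoc)
  qed (use \<mu> in auto)
qed

lemma rho_less_1_if_pow_mult_vec_tendsto_0:
  assumes M: "M \<in> carrier_mat n n" and n: "0 < n"
    and lim: "\<And>x. x \<in> carrier_vec n \<Longrightarrow> (\<lambda>k. vnorm (M ^\<^sub>m k *\<^sub>v x)) \<longlonglongrightarrow> 0"
  shows "rho M < 1"
proof (rule ccontr)
  assume "\<not> rho M < 1"
  let ?Mc = "map_mat complex_of_real M"
  have Mc: "?Mc \<in> carrier_mat n n"
    using M by simp
  obtain ev where "ev \<in> spectrum ?Mc" and ev: "1 \<le> norm ev"
    using spectral_radius_mem_max(1)[OF Mc n] \<open>\<not> rho M < 1\<close> by (auto simp: rho_def)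
  then obtain v where v: "eigenvector ?Mc v ev"
    unfolding spectrum_def eigenvalue_def by auto
  then have v_carrier: "v \<in> carrier_vec n" and "v \<noteq> 0\<^sub>v n"
    using Mc by (auto simp: eigenvector_def)
  then obtain j where j: "j < n" "v $ j \<noteq> 0"
    by (metis carrier_vecD eq_vecI index_zero_vec)
  define a where "a = vec n (\<lambda>i. Re (v $ i))"
  define b where "b = vec n (\<lambda>i. Im (v $ i))"
  \<comment> \<open>the real and imaginary parts of an eigenvector for \<open>ev\<close> are real trajectories that do not decay\<close>
  have bound: "norm (v $ j) \<le> vnorm (M ^\<^sub>m k *\<^sub>v a) + vnorm (M ^\<^sub>m k *\<^sub>v b)" for k
  proof -
    define S where "S = (\<Sum>l = 0..<n. complex_of_real ((M ^\<^sub>m k) $$ (j, l)) * v $ l)"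
    have "?Mc ^\<^sub>m k = map_mat complex_of_real (M ^\<^sub>m k)"
      by (rule of_real_hom.mat_hom_pow[OF M, symmetric])
    then have S: "(?Mc ^\<^sub>m k *\<^sub>v v) $ j = S"
      unfolding S_def using M v_carrier j by (simp add: scalar_prod_def)
    have re: "Re S = (M ^\<^sub>m k *\<^sub>v a) $ j" and im: "Im S = (M ^\<^sub>m k *\<^sub>v b) $ j"
      unfolding S_def using M j by (simp_all add: scalar_prod_def a_def b_def)
    have "norm (v $ j) \<le> norm ev ^ k * norm (v $ j)"
      using one_le_power[OF ev, of k] by (simp add: mult_le_cancel_right1)
    also have "\<dots> = norm ((?Mc ^\<^sub>m k *\<^sub>v v) $ j)"
      using eigenvector_pow[OF Mc v, of k] v_carrier j by (simp add: norm_mult norm_power)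
    also have "\<dots> = norm S"
      by (simp only: S)
    also have "\<dots> \<le> \<bar>Re S\<bar> + \<bar>Im S\<bar>"
      by (rule cmod_le)
    also have "\<dots> \<le> vnorm (M ^\<^sub>m k *\<^sub>v a) + vnorm (M ^\<^sub>m k *\<^sub>v b)"
      unfolding re im using M j by (intro add_mono abs_index_le_vnorm) simp_all
    finally show ?thesis .
  qed
  have "(\<lambda>k. vnorm (M ^\<^sub>m k *\<^sub>v a) + vnorm (M ^\<^sub>m k *\<^sub>v b)) \<longlonglongrightarrow> 0"
    using tendsto_add_zero[OF lim lim] by (simp add: a_def b_def)
  then have "norm (v $ j) \<le> 0"
    using bound by (intro LIMSEQ_le_const) auto
  then show False
    using j by simp
qed

lemma rho_less_1_if_pow_mult_vec_eq_0:
  assumes M: "M \<in> carrier_mat n n" and n: "0 < n"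
    and nil: "\<And>x. x \<in> carrier_vec n \<Longrightarrow> M ^\<^sub>m j *\<^sub>v x = 0\<^sub>v n"
  shows "rho M < 1"
proof (rule rho_less_1_if_pow_mult_vec_tendsto_0[OF M n])
  fix x :: "real vec" assume x: "x \<in> carrier_vec n"
  have "M ^\<^sub>m k *\<^sub>v x = 0\<^sub>v n" if "j \<le> k" for k
    using pow_mat_add_mult_vec[OF M x, of "k - j" j] nil[OF x] M that by simp
  then have "eventually (\<lambda>k. vnorm (M ^\<^sub>m k *\<^sub>v x) = 0) sequentially"
    by (intro eventually_sequentiallyI[of j]) simp
  then show "(\<lambda>k. vnorm (M ^\<^sub>m k *\<^sub>v x)) \<longlonglongrightarrow> 0"
    by (rule tendsto_eventually)
qed

lemma dim_Abar [simp]: "dim_row (Abar p) = 2 * p" "dim_col (Abar p) = 2 * p"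
  by (simp_all add: Abar_def)

lemma dim_Cbar [simp]: "dim_row (Cbar p) = p" "dim_col (Cbar p) = 2 * p"
  by (simp_all add: Cbar_def)

lemma dim_Fmat [simp]: "dim_row (Fmat p) = p" "dim_col (Fmat p) = 2 * p"
  by (simp_all add: Fmat_def)

lemma dim_Bbar [simp]: "dim_row (Bbar P) = 2 * dim_row P" "dim_col (Bbar P) = dim_col P"
  by (simp_all add: Bbar_def)

lemma Abar_carrier [simp]: "Abar p \<in> carrier_mat (2 * p) (2 * p)"
  by (intro carrier_matI) simp_all

lemma Cbar_carrier [simp]: "Cbar p \<in> carrier_mat p (2 * p)"
  by (intro carrier_matI) simp_all

lemma Fmat_carrier [simp]: "Fmat p \<in> carrier_mat p (2 * p)"
  by (intro carrier_matI) simp_all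

lemma Bbar_eq_append_rows: "P \<in> carrier_mat p m \<Longrightarrow> Bbar P = P @\<^sub>r 0\<^sub>m p m"
  by (rule eq_matI) (auto simp: Bbar_def append_rows_def)

lemma Bbar_carrier: "P \<in> carrier_mat p m \<Longrightarrow> Bbar P \<in> carrier_mat (2 * p) m"
  by (intro carrier_matI) simp_all

lemma transpose_Fmat: "(Fmat p)\<^sup>T = 0\<^sub>m p p @\<^sub>r 1\<^sub>m p"
  by (rule eq_matI) (auto simp: Fmat_def append_rows_def)

lemma Abar_mult_append:
  assumes "a \<in> carrier_vec p" "b \<in> carrier_vec p"
  shows "Abar p *\<^sub>v (a @\<^sub>v b) = (a + b) @\<^sub>v b"
proof -
  have "Abar p = four_block_mat (1\<^sub>m p) (1\<^sub>m p) (0\<^sub>m p p) (1\<^sub>m p)"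
    by (rule eq_matI) (auto simp: Abar_def)
  then show ?thesis
    using assms by (simp add: four_block_mat_mult_vec[of _ p p _ p _ p])
qed

lemma Cbar_mult_append:
  assumes "a \<in> carrier_vec p" "b \<in> carrier_vec p"
  shows "Cbar p *\<^sub>v (a @\<^sub>v b) = a"
proof -
  have "Cbar p = four_block_mat (1\<^sub>m p) (0\<^sub>m p p) (0\<^sub>m 0 p) (0\<^sub>m 0 p)"
    by (rule eq_matI) (auto simp: Cbar_def)
  then show ?thesis
    using assms by (simp add: four_block_mat_mult_vec[of _ p p _ p _ 0]) (rule eq_vecI; simp)
qed

lemma Bbar_mult_vec:
  "P \<in> carrier_mat p m \<Longrightarrow> u \<in> carrier_vec m \<Longrightarrow> Bbar P *\<^sub>v u = (P *\<^sub>v u) @\<^sub>v 0\<^sub>v p"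
  using mat_mult_append[of P p m "0\<^sub>m p m" p u] by (simp add: Bbar_eq_append_rows)

lemma Fmat_transpose_mult_vec: "d \<in> carrier_vec p \<Longrightarrow> (Fmat p)\<^sup>T *\<^sub>v d = 0\<^sub>v p @\<^sub>v d"
  using mat_mult_append[of "0\<^sub>m p p" p p "1\<^sub>m p" p d] by (simp add: transpose_Fmat)

lemma vnorm_Fmat_transpose_mult_vec: "d \<in> carrier_vec p \<Longrightarrow> vnorm ((Fmat p)\<^sup>T *\<^sub>v d) = vnorm d"
  by (simp add: Fmat_transpose_mult_vec vnorm_append)

lemma closed_loop_mult_vec:
  assumes "L \<in> carrier_mat (2 * p) p" "x \<in> carrier_vec (2 * p)"
  shows "(Abar p - L * Cbar p) *\<^sub>v x = Abar p *\<^sub>v x - L *\<^sub>v (Cbar p *\<^sub>v x)"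
  using assms assoc_mult_mat_vec[of L "2 * p" p "Cbar p" "2 * p" x]
  by (simp add: minus_mult_distrib_mat_vec[of _ "2 * p" "2 * p"])

locale plant =
  fixes p m :: nat and P :: "real mat" and Yd :: "real vec" and U N :: "nat \<Rightarrow> real vec"
  assumes P_carrier: "P \<in> carrier_mat p m" and Yd_carrier: "Yd \<in> carrier_vec p"
    and U_carrier: "\<And>k. U k \<in> carrier_vec m" and N_carrier: "\<And>k. N k \<in> carrier_vec p"
begin

lemma dim_P [simp]: "dim_row P = p" "dim_col P = m"
  using P_carrier by simp_all

lemma Err_carrier [simp]: "Err P Yd U N k \<in> carrier_vec p"
  using P_carrier Yd_carrier U_carrier N_carrier by (simp add: Err_def)

lemma Dist_carrier [simp]: "Dist N k \<in> carrier_vec p"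
  using N_carrier by (simp add: Dist_def dlt_def)

lemma Ubar_carrier [simp]: "Ubar U k \<in> carrier_vec m"
  using U_carrier by (simp add: Ubar_def dlt_def)

lemma dlt2_N_carrier [simp]: "dlt (dlt N) k \<in> carrier_vec p"
  using N_carrier by (simp add: dlt_def)

lemma Fmat_transpose_dlt2_N_carrier [simp]: "(Fmat p)\<^sup>T *\<^sub>v dlt (dlt N) k \<in> carrier_vec (2 * p)"
  by (rule mult_mat_vec_carrier[of _ "2 * p" p]) simp_all

lemma Xbar_carrier [simp]: "Xbar P Yd U N k \<in> carrier_vec (2 * p)"
  unfolding Xbar_def mult_2 by (rule append_carrier_vec) simp_all

lemma Err_eq_Cbar_Xbar: "Err P Yd U N k = Cbar p *\<^sub>v Xbar P Yd U N k"
  by (simp add: Xbar_def Cbar_mult_append)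

lemma Xbar_Suc:
  "Xbar P Yd U N (Suc k) =
     Abar p *\<^sub>v Xbar P Yd U N k + Bbar P *\<^sub>v Ubar U k - (Fmat p)\<^sup>T *\<^sub>v dlt (dlt N) k"
proof -
  let ?E = "Err P Yd U N k" and ?D = "Dist N k" and ?u = "P *\<^sub>v Ubar U k"
    and ?d = "dlt (dlt N) k"
  have u: "?u \<in> carrier_vec p"
    using P_carrier by simp
  have "Ubar U k = U k - U (Suc k)"
    using U_carrier[of k] U_carrier[of "Suc k"] by (intro eq_vecI) (auto simp: Ubar_def dlt_def)
  then have E: "?E + ?D + ?u = Err P Yd U N (Suc k)"
    using P_carrier U_carrier[of k] U_carrier[of "Suc k"] N_carrier[of k] N_carrier[of "Suc k"] Yd_carrier
    by (intro eq_vecI) (simp_all add: Err_def Dist_def dlt_def mult_minus_distrib_mat_vec)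
  have D: "?D - ?d = Dist N (Suc k)"
    using N_carrier[of k] N_carrier[of "Suc k"] N_carrier[of "Suc (Suc k)"]
    by (intro eq_vecI) (simp_all add: Dist_def dlt_def)
  have "Abar p *\<^sub>v Xbar P Yd U N k + Bbar P *\<^sub>v Ubar U k - (Fmat p)\<^sup>T *\<^sub>v ?d
      = ((?E + ?D) @\<^sub>v ?D) + (?u @\<^sub>v 0\<^sub>v p) - (0\<^sub>v p @\<^sub>v ?d)"
    using P_carrier by (simp add: Xbar_def Abar_mult_append Bbar_mult_vec Fmat_transpose_mult_vec)
  also have "\<dots> = (?E + ?D + ?u) @\<^sub>v (?D - ?d)"
    using u by (simp add: append_vec_add[of _ p _ _ p] append_vec_diff[of _ p _ _ p])
  finally show ?thesis
    by (simp add: Xbar_def E D)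
qed

lemma dlt2_N_vnorm_le:
  assumes "\<And>k. vnorm (N k) \<le> B"
  shows "vnorm (dlt (dlt N) k) \<le> 4 * B"
proof -
  have dlt_N: "dlt N j \<in> carrier_vec p" "vnorm (dlt N j) \<le> 2 * B" for j
    using vnorm_diff_le[OF N_carrier N_carrier, of "Suc j" j] assms[of "Suc j"] assms[of j] N_carrier
    by (simp_all add: dlt_def)
  have "vnorm (dlt (dlt N) k) \<le> vnorm (dlt N (Suc k)) + vnorm (dlt N k)"
    unfolding dlt_def[of "dlt N"] by (rule vnorm_diff_le[OF dlt_N(1) dlt_N(1)])
  then show ?thesis
    using dlt_N(2)[of k] dlt_N(2)[of "Suc k"] by simp
qed

end

locale eso_plant = plant +
  fixes L :: "real mat" and x0 :: "real vec"
  assumes L_carrier: "L \<in> carrier_mat (2 * p) p" and x0_carrier: "x0 \<in> carrier_vec (2 * p)"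
begin

lemma dim_L [simp]: "dim_row L = 2 * p" "dim_col L = p"
  using L_carrier by simp_all

lemma eso_carrier [simp]: "eso P Yd L U N x0 k \<in> carrier_vec (2 * p)"
proof (induction k)
  case 0
  then show ?case using x0_carrier by simp
next
  case (Suc k)
  have "Cbar p *\<^sub>v eso P Yd L U N x0 k \<in> carrier_vec p"
    using Suc by (rule mult_mat_vec_carrier[OF Cbar_carrier])
  then show ?case
    unfolding eso.simps dim_P
    by (intro add_carrier_vec mult_mat_vec_carrier[OF Abar_carrier Suc]
        mult_mat_vec_carrier[OF Bbar_carrier[OF P_carrier] Ubar_carrier]
        mult_mat_vec_carrier[OF L_carrier] minus_carrier_vec[OF Err_carrier])
qed

lemma Xtil_carrier [simp]: "Xtil P Yd L U N x0 k \<in> carrier_vec (2 * p)"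
  by (simp add: Xtil_def)

lemma closed_loop_carrier [simp]: "Abar p - L * Cbar p \<in> carrier_mat (2 * p) (2 * p)"
  by (intro carrier_matI) simp_all

lemma eso_Suc:
  "eso P Yd L U N x0 (Suc k) =
     (Abar p - L * Cbar p) *\<^sub>v eso P Yd L U N x0 k + Bbar P *\<^sub>v Ubar U k + L *\<^sub>v Err P Yd U N k"
proof -
  let ?x = "eso P Yd L U N x0 k"
  have Cx: "Cbar p *\<^sub>v ?x \<in> carrier_vec p"
    by (rule mult_mat_vec_carrier[OF Cbar_carrier eso_carrier])
  have Bu: "Bbar P *\<^sub>v Ubar U k \<in> carrier_vec (2 * p)"
    by (rule mult_mat_vec_carrier[OF Bbar_carrier[OF P_carrier] Ubar_carrier])
  have "L *\<^sub>v (Err P Yd U N k - Cbar p *\<^sub>v ?x) = L *\<^sub>v Err P Yd U N k - L *\<^sub>v (Cbar p *\<^sub>v ?x)"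
    using Cx by (simp add: mult_minus_distrib_mat_vec[OF L_carrier])
  then show ?thesis
    using Cx Bu L_carrier by (intro eq_vecI) (simp_all add: closed_loop_mult_vec)
qed

lemma Xtil_Suc:
  "Xtil P Yd L U N x0 (Suc k) =
     (Abar p - L * Cbar p) *\<^sub>v Xtil P Yd L U N x0 k - (Fmat p)\<^sup>T *\<^sub>v dlt (dlt N) k"
proof -
  let ?x = "eso P Yd L U N x0 k" and ?X = "Xbar P Yd U N k"
  have CX: "Cbar p *\<^sub>v ?X \<in> carrier_vec p" and Cx: "Cbar p *\<^sub>v ?x \<in> carrier_vec p"
    by (rule mult_mat_vec_carrier[OF Cbar_carrier], simp)+
  have Bu: "Bbar P *\<^sub>v Ubar U k \<in> carrier_vec (2 * p)"
    by (rule mult_mat_vec_carrier[OF Bbar_carrier[OF P_carrier] Ubar_carrier])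
  have "(Abar p - L * Cbar p) *\<^sub>v (?X - ?x)
      = (Abar p *\<^sub>v ?X - L *\<^sub>v (Cbar p *\<^sub>v ?X)) - (Abar p *\<^sub>v ?x - L *\<^sub>v (Cbar p *\<^sub>v ?x))"
    by (simp add: mult_minus_distrib_mat_vec[of _ "2 * p" "2 * p"] closed_loop_mult_vec L_carrier)
  moreover have "L *\<^sub>v (Err P Yd U N k - Cbar p *\<^sub>v ?x) = L *\<^sub>v (Cbar p *\<^sub>v ?X) - L *\<^sub>v (Cbar p *\<^sub>v ?x)"
    using CX Cx by (simp add: Err_eq_Cbar_Xbar mult_minus_distrib_mat_vec[OF L_carrier])
  ultimately show ?thesis
    using CX Cx Bu L_carrier by (intro eq_vecI) (simp_all add: Xtil_def Xbar_Suc)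
qed

lemma Xtil_eq_pow_if_dlt2_N_eq_0:
  assumes "\<And>k. dlt (dlt N) k = 0\<^sub>v p"
  shows "Xtil P Yd L U N x0 k = (Abar p - L * Cbar p) ^\<^sub>m k *\<^sub>v Xtil P Yd L U N x0 0"
proof -
  have "(Fmat p)\<^sup>T *\<^sub>v dlt (dlt N) k = 0\<^sub>v (2 * p)" for k
    unfolding assms by (rule mult_mat_vec_zero_vec) simp
  then have "Xtil P Yd L U N x0 (Suc k) = (Abar p - L * Cbar p) *\<^sub>v Xtil P Yd L U N x0 k" for k
    using mult_mat_vec_carrier[OF closed_loop_carrier Xtil_carrier] by (simp add: Xtil_Suc)
  then show ?thesis
    by (rule linear_recursion_eq_pow[where X = "Xtil P Yd L U N x0" and j = 0,
          OF closed_loop_carrier Xtil_carrier, unfolded add_0])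
qed

lemma Xtil_estimates:
  assumes N_le: "\<And>k. vnorm (N k) \<le> B"
    and K: "0 \<le> K" and \<mu>: "0 \<le> \<mu>" "\<mu> < 1"
    and decay: "\<And>k x. x \<in> carrier_vec (2 * p) \<Longrightarrow>
      vnorm ((Abar p - L * Cbar p) ^\<^sub>m k *\<^sub>v x) \<le> K * \<mu> ^ k * vnorm x"
  shows "vnorm (Xtil P Yd L U N x0 k)
           \<le> K * \<mu> ^ k * vnorm (Xtil P Yd L U N x0 0) + K * beta_d2N N / (1 - \<mu>)"
    and "limsup (\<lambda>k. ereal (vnorm (Xtil P Yd L U N x0 k))) \<le> ereal (K * beta_ess_d2N N / (1 - \<mu>))"
proof -
  let ?d = "dlt (dlt N)"
  interpret error: exp_stable_recursion "2 * p" "Abar p - L * Cbar p" "Xtil P Yd L U N x0"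
    "\<lambda>k. - ((Fmat p)\<^sup>T *\<^sub>v ?d k)" K \<mu>
  proof
    show "Xtil P Yd L U N x0 (Suc k) =
        (Abar p - L * Cbar p) *\<^sub>v Xtil P Yd L U N x0 k + - ((Fmat p)\<^sup>T *\<^sub>v ?d k)" for k
      using mult_mat_vec_carrier[OF closed_loop_carrier Xtil_carrier, of k]
      by (simp add: Xtil_Suc minus_add_uminus_vec[of _ "2 * p"])
  qed (use K \<mu> decay in simp_all)
  have d_le: "vnorm (?d k) \<le> 4 * B" for k
    by (rule dlt2_N_vnorm_le[OF N_le])
  have "vnorm (?d k) \<le> beta_d2N N" for k
    unfolding beta_d2N_def using d_le by (intro cSUP_upper bdd_aboveI2) auto
  then show "vnorm (Xtil P Yd L U N x0 k)
      \<le> K * \<mu> ^ k * vnorm (Xtil P Yd L U N x0 0) + K * beta_d2N N / (1 - \<mu>)"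
    using error.norm_le[of 0 "beta_d2N N" k] by (simp add: vnorm_Fmat_transpose_mult_vec)
  \<comment> \<open>bounded uncertainty makes the limit superior finite, so \<open>beta_ess_d2N\<close> is its real value\<close>
  have "limsup (\<lambda>k. ereal (vnorm (?d k))) \<le> ereal (4 * B)"
    using d_le by (intro Limsup_bounded always_eventually) simp
  moreover have "0 \<le> limsup (\<lambda>k. ereal (vnorm (?d k)))"
    by (intro le_Limsup always_eventually) simp_all
  ultimately have "limsup (\<lambda>k. ereal (vnorm (?d k))) = ereal (beta_ess_d2N N)"
    unfolding beta_ess_d2N_def by (cases "limsup (\<lambda>k. ereal (vnorm (?d k)))") auto
  then show "limsup (\<lambda>k. ereal (vnorm (Xtil P Yd L U N x0 k))) \<le> ereal (K * beta_ess_d2N N / (1 - \<mu>))"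
    using error.limsup_le_limsup[of "beta_ess_d2N N"] by (simp add: vnorm_Fmat_transpose_mult_vec)
qed

end

lemma eso_plantI:
  assumes "P \<in> carrier_mat p m" "Yd \<in> carrier_vec p" "L \<in> carrier_mat (2 * p) p"
    and "(\<forall>k. U k \<in> carrier_vec m) \<and> (\<forall>k. N k \<in> carrier_vec p) \<and> x0 \<in> carrier_vec (2 * p)"
  shows "eso_plant p m P Yd U N L x0"
  using assms by unfold_locales auto

lemma class_Kinf_linear:
  assumes "0 < A"
  shows "class_Kinf (\<lambda>s. A * s)"
  unfolding class_Kinf_def class_K_def
proof (intro conjI)
  show "continuous_on {0..} (\<lambda>s. A * s)"
    by (intro continuous_intros)
  show "strict_mono_on {0..} (\<lambda>s. A * s)"
    using assms by (intro strict_mono_onI) simp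
  show "filterlim (\<lambda>s. A * s) at_top at_top"
    by (rule filterlim_tendsto_pos_mult_at_top[OF tendsto_const assms filterlim_ident])
qed simp

lemma class_KL_geometric:
  assumes "0 < \<mu>" "\<mu> < 1"
  shows "class_KL (\<lambda>s k. s * \<mu> ^ k)"
  unfolding class_KL_def class_K_def
proof (intro conjI allI impI)
  fix k :: nat
  show "continuous_on {0..} (\<lambda>s. s * \<mu> ^ k)"
    by (intro continuous_intros)
  show "strict_mono_on {0..} (\<lambda>s. s * \<mu> ^ k)"
    using assms by (intro strict_mono_onI) simp
next
  fix s :: real assume "0 \<le> s"
  then show "antimono (\<lambda>k. s * \<mu> ^ k)"
    using assms by (intro antimonoI mult_left_mono power_decreasing) auto
  have "(\<lambda>k. s * \<mu> ^ k) \<longlonglongrightarrow> s * 0"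
    using assms by (intro tendsto_intros LIMSEQ_power_zero) auto
  then show "(\<lambda>k. s * \<mu> ^ k) \<longlonglongrightarrow> 0"
    by simp
qed simp

section \<open>Stability of the observation error\<close>

definition eso_error_estimates ::
  "nat \<Rightarrow> nat \<Rightarrow> real mat \<Rightarrow> real vec \<Rightarrow> real mat \<Rightarrow>
    (real \<Rightarrow> real) \<Rightarrow> (real \<Rightarrow> nat \<Rightarrow> real) \<Rightarrow> (real \<Rightarrow> real) \<Rightarrow> bool" where
  "eso_error_estimates p m P Yd L \<chi>1 \<zeta> \<chi>2 \<longleftrightarrow>
    (\<forall>U N x0. (\<forall>k. U k \<in> carrier_vec m) \<and> (\<forall>k. N k \<in> carrier_vec p) \<and> x0 \<in> carrier_vec (2*p)
        \<and> (\<exists>B. \<forall>k. vnorm (N k) \<le> B) \<longrightarrow>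
      (\<exists>\<beta>0\<ge>0. \<forall>k. vnorm (Xtil P Yd L U N x0 k) \<le> \<chi>1 (beta_d2N N) + \<zeta> \<beta>0 k) \<and>
      limsup (\<lambda>k. ereal (vnorm (Xtil P Yd L U N x0 k))) \<le> ereal (\<chi>2 (beta_ess_d2N N)))"

lemma eso_error_estimates_if_rho_less_1:
  assumes p: "0 < p" and P: "P \<in> carrier_mat p m" and Yd: "Yd \<in> carrier_vec p"
    and L: "L \<in> carrier_mat (2 * p) p" and r: "rho (Abar p - L * Cbar p) < 1"
  shows "\<exists>\<chi>1 \<zeta> \<chi>2. class_Kinf \<chi>1 \<and> class_KL \<zeta> \<and> class_Kinf \<chi>2 \<and> eso_error_estimates p m P Yd L \<chi>1 \<zeta> \<chi>2"
proof -
  have M: "Abar p - L * Cbar p \<in> carrier_mat (2 * p) (2 * p)"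
    using L by (intro carrier_matI) simp_all
  obtain K \<mu> where K: "0 < K" and \<mu>: "0 < \<mu>" "\<mu> < 1"
    and decay: "\<And>k x. x \<in> carrier_vec (2 * p) \<Longrightarrow>
      vnorm ((Abar p - L * Cbar p) ^\<^sub>m k *\<^sub>v x) \<le> K * \<mu> ^ k * vnorm x"
    using rho_less_1_imp_pow_decay[OF M _ r] p by auto
  define A where "A = K / (1 - \<mu>)"
  have "eso_error_estimates p m P Yd L (\<lambda>s. A * s) (\<lambda>s k. s * \<mu> ^ k) (\<lambda>s. A * s)"
    unfolding eso_error_estimates_def
  proof (intro allI impI)
    fix U N :: "nat \<Rightarrow> real vec" and x0 :: "real vec"
    assume H: "(\<forall>k. U k \<in> carrier_vec m) \<and> (\<forall>k. N k \<in> carrier_vec p) \<and> x0 \<in> carrier_vec (2 * p)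
      \<and> (\<exists>B. \<forall>k. vnorm (N k) \<le> B)"
    then obtain B where B: "\<And>k. vnorm (N k) \<le> B"
      by auto
    interpret eso_plant p m P Yd U N L x0
      using H P Yd L by unfold_locales auto
    note est = Xtil_estimates[OF B _ _ \<mu>(2) decay]
    show "(\<exists>\<beta>0\<ge>0. \<forall>k. vnorm (Xtil P Yd L U N x0 k) \<le> A * beta_d2N N + \<beta>0 * \<mu> ^ k) \<and>
      limsup (\<lambda>k. ereal (vnorm (Xtil P Yd L U N x0 k))) \<le> ereal (A * beta_ess_d2N N)"
      using est K \<mu>
      by (intro conjI exI[of _ "K * vnorm (Xtil P Yd L U N x0 0)"]) (auto simp: A_def algebra_simps)
  qed
  moreover have "0 < A"
    using K \<mu> by (simp add: A_def)
  ultimately show ?thesis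
    using class_Kinf_linear class_KL_geometric[OF \<mu>] by blast
qed

lemma rho_less_1_if_eso_error_estimates:
  assumes p: "0 < p" and P: "P \<in> carrier_mat p m" and Yd: "Yd \<in> carrier_vec p"
    and L: "L \<in> carrier_mat (2 * p) p"
    and \<chi>1: "class_Kinf \<chi>1" and \<zeta>: "class_KL \<zeta>" and est: "eso_error_estimates p m P Yd L \<chi>1 \<zeta> \<chi>2"
  shows "rho (Abar p - L * Cbar p) < 1"
proof (rule rho_less_1_if_pow_mult_vec_tendsto_0)
  show "Abar p - L * Cbar p \<in> carrier_mat (2 * p) (2 * p)"
    using L by (intro carrier_matI) simp_all
  show "0 < 2 * p"
    using p by simp
  fix a :: "real vec" assume a: "a \<in> carrier_vec (2 * p)"
  \<comment> \<open>without input and uncertainty, the initial estimate can realise any initial error \<open>a\<close>\<close>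
  define U :: "nat \<Rightarrow> real vec" where "U k = 0\<^sub>v m" for k
  define N :: "nat \<Rightarrow> real vec" where "N k = 0\<^sub>v p" for k
  interpret plant p m P Yd U N
    using P Yd by unfold_locales (simp_all add: U_def N_def)
  define x0 where "x0 = Xbar P Yd U N 0 - a"
  interpret eso_plant p m P Yd U N L x0
    using L minus_carrier_vec[OF Xbar_carrier a] by unfold_locales (simp_all add: x0_def)
  have d2N: "dlt (dlt N) k = 0\<^sub>v p" for k
    by (simp add: dlt_def N_def)
  have Xtil_0: "Xtil P Yd L U N x0 0 = a"
    using a Xbar_carrier[of 0] unfolding Xtil_def eso.simps x0_def by (intro eq_vecI) auto
  have Xtil: "Xtil P Yd L U N x0 k = (Abar p - L * Cbar p) ^\<^sub>m k *\<^sub>v a" for k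
    by (simp only: Xtil_eq_pow_if_dlt2_N_eq_0[OF d2N, of k] Xtil_0)
  obtain \<beta>0 where "0 \<le> \<beta>0" and bound: "\<And>k. vnorm (Xtil P Yd L U N x0 k) \<le> \<chi>1 (beta_d2N N) + \<zeta> \<beta>0 k"
  proof -
    have "\<exists>B. \<forall>k. vnorm (N k) \<le> B"
      by (intro exI[of _ 0] allI) (simp add: N_def)
    then show thesis
      using that est U_carrier N_carrier x0_carrier unfolding eso_error_estimates_def by blast
  qed
  moreover have "beta_d2N N = 0" and "\<chi>1 0 = 0"
    using \<chi>1 by (simp_all add: beta_d2N_def d2N class_Kinf_def class_K_def)
  ultimately have le: "vnorm ((Abar p - L * Cbar p) ^\<^sub>m k *\<^sub>v a) \<le> \<zeta> \<beta>0 k" for k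
    using bound[of k] by (simp add: Xtil)
  have lim: "(\<lambda>k. \<zeta> \<beta>0 k) \<longlonglongrightarrow> 0"
    using \<zeta> \<open>0 \<le> \<beta>0\<close> unfolding class_KL_def by blast
  show "(\<lambda>k. vnorm ((Abar p - L * Cbar p) ^\<^sub>m k *\<^sub>v a)) \<longlonglongrightarrow> 0"
    by (rule tendsto_sandwich[OF _ _ tendsto_const lim]) (simp_all add: le)
qed

lemma eso_error_estimates_iff_rho_less_1:
  assumes "0 < p" "P \<in> carrier_mat p m" "Yd \<in> carrier_vec p" "L \<in> carrier_mat (2 * p) p"
  shows "(\<exists>\<chi>1 \<zeta> \<chi>2. class_Kinf \<chi>1 \<and> class_KL \<zeta> \<and> class_Kinf \<chi>2 \<and> eso_error_estimates p m P Yd L \<chi>1 \<zeta> \<chi>2)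
    \<longleftrightarrow> rho (Abar p - L * Cbar p) < 1"
  using eso_error_estimates_if_rho_less_1[OF assms] rho_less_1_if_eso_error_estimates[OF assms] by blast

definition stabilizing_gain :: "nat \<Rightarrow> real mat" where
  "stabilizing_gain p = (2 \<cdot>\<^sub>m 1\<^sub>m p) @\<^sub>r 1\<^sub>m p"

lemma stabilizing_gain_carrier: "stabilizing_gain p \<in> carrier_mat (2 * p) p"
  unfolding stabilizing_gain_def mult_2 by (intro carrier_append_rows) simp_all

lemma closed_loop_stabilizing_gain_mult_append:
  assumes a: "a \<in> carrier_vec p" and b: "b \<in> carrier_vec p"
  shows "(Abar p - stabilizing_gain p * Cbar p) *\<^sub>v (a @\<^sub>v b) = (b - a) @\<^sub>v (b - a)"
proof -
  have "stabilizing_gain p *\<^sub>v a = (2 \<cdot>\<^sub>v a) @\<^sub>v a"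
    using a mat_mult_append[of "2 \<cdot>\<^sub>m 1\<^sub>m p" p p "1\<^sub>m p" p a]
    by (simp add: stabilizing_gain_def smult_mat_mult_vec[of _ p p])
  moreover have "a @\<^sub>v b \<in> carrier_vec (2 * p)"
    unfolding mult_2 using a b by (rule append_carrier_vec)
  ultimately have "(Abar p - stabilizing_gain p * Cbar p) *\<^sub>v (a @\<^sub>v b) = ((a + b) @\<^sub>v b) - ((2 \<cdot>\<^sub>v a) @\<^sub>v a)"
    using a b by (simp add: closed_loop_mult_vec[OF stabilizing_gain_carrier] Abar_mult_append Cbar_mult_append)
  also have "\<dots> = (b - a) @\<^sub>v (b - a)"
    using a b by (simp add: append_vec_diff[of _ p _ _ p]) (intro eq_vecI; simp)
  finally show ?thesis .
qed

lemma rho_closed_loop_stabilizing_gain: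
  assumes "0 < p"
  shows "rho (Abar p - stabilizing_gain p * Cbar p) < 1"
proof (rule rho_less_1_if_pow_mult_vec_eq_0)
  let ?M = "Abar p - stabilizing_gain p * Cbar p"
  show M: "?M \<in> carrier_mat (2 * p) (2 * p)"
    using stabilizing_gain_carrier by (intro carrier_matI) auto
  show "0 < 2 * p"
    using assms by simp
  fix x :: "real vec" assume x: "x \<in> carrier_vec (2 * p)"
  define a b where "a = vec_first x p" and "b = vec_last x p"
  have ab: "a \<in> carrier_vec p" "b \<in> carrier_vec p" and x_eq: "x = a @\<^sub>v b"
    using x by (auto simp: a_def b_def mult_2)
  have Mx: "?M *\<^sub>v x \<in> carrier_vec (2 * p)"
    using M x by (rule mult_mat_vec_carrier)
  have "?M ^\<^sub>m 2 *\<^sub>v x = ?M *\<^sub>v (?M *\<^sub>v x)"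
    unfolding numeral_2_eq_2 pow_mat_Suc_mult_vec[OF M x] pow_mat_Suc_mult_vec[OF M Mx]
    using carrier_matD(1)[OF stabilizing_gain_carrier] mult_mat_vec_carrier[OF M Mx] by simp
  also have "\<dots> = ((b - a) - (b - a)) @\<^sub>v ((b - a) - (b - a))"
    using ab by (simp add: x_eq closed_loop_stabilizing_gain_mult_append)
  also have "\<dots> = 0\<^sub>v (2 * p)"
    using ab by (intro eq_vecI) auto
  finally show "?M ^\<^sub>m 2 *\<^sub>v x = 0\<^sub>v (2 * p)" .
qed

theorem lemma3:
  fixes p m :: nat and P L :: "real mat" and Yd :: "real vec"
  assumes "0 < p" and "P \<in> carrier_mat p m" and "Yd \<in> carrier_vec p"
    and "L \<in> carrier_mat (2*p) p"
  shows
  "(\<forall>U N x0. (\<forall>k. U k \<in> carrier_vec m) \<and> (\<forall>k. N k \<in> carrier_vec p) \<and> x0 \<in> carrier_vec (2*p) \<longrightarrow>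
      (\<forall>k. eso P Yd L U N x0 (Suc k) =
             (Abar p - L * Cbar p) *\<^sub>v eso P Yd L U N x0 k + Bbar P *\<^sub>v Ubar U k + L *\<^sub>v Err P Yd U N k) \<and>
      (\<forall>k. Xtil P Yd L U N x0 (Suc k) =
             (Abar p - L * Cbar p) *\<^sub>v Xtil P Yd L U N x0 k - (Fmat p)\<^sup>T *\<^sub>v dlt (dlt N) k))
   \<and>
   ((\<exists>\<chi>1 \<zeta> \<chi>2. class_Kinf \<chi>1 \<and> class_KL \<zeta> \<and> class_Kinf \<chi>2 \<and>
      (\<forall>U N x0. (\<forall>k. U k \<in> carrier_vec m) \<and> (\<forall>k. N k \<in> carrier_vec p) \<and> x0 \<in> carrier_vec (2*p)
          \<and> (\<exists>B. \<forall>k. vnorm (N k) \<le> B) \<longrightarrow>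
        (\<exists>\<beta>0\<ge>0. \<forall>k. vnorm (Xtil P Yd L U N x0 k) \<le> \<chi>1 (beta_d2N N) + \<zeta> \<beta>0 k) \<and>
        limsup (\<lambda>k. ereal (vnorm (Xtil P Yd L U N x0 k))) \<le> ereal (\<chi>2 (beta_ess_d2N N))))
    \<longleftrightarrow> rho (Abar p - L * Cbar p) < 1)
   \<and>
   (\<exists>L'. L' \<in> carrier_mat (2*p) p \<and> rho (Abar p - L' * Cbar p) < 1)"
proof -
  note iff = eso_error_estimates_iff_rho_less_1[OF assms, unfolded eso_error_estimates_def]
  show ?thesis
    by (intro conjI allI impI iff eso_plant.eso_Suc[where m = m] eso_plant.Xtil_Suc[where m = m] eso_plantI[OF assms(2-4)]
        exI[of _ "stabilizing_gain p"] stabilizing_gain_carrier rho_closed_loop_stabilizing_gain[OF assms(1)])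
      simp_all
qed

end
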